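(* Let $k=k(n)$ be integers with $3\le k(n)\le n-3$ for all sufficiently large $n$, and suppose $\log k(n)/\log n\to 0$ as $n\to\infty$. Then for all sufficiently large $n$, \[ \mathsf{BO}(k(n),\mathbb{Z}/n\mathbb{Z})\ge n\exp\!\left(-5\sqrt{\log k(n)\,\log n}\right). \]
   Context: For a positive integer $k$, a set $\{g_1,\dots,g_k\}$ of $k$ distinct elements of a finite abelian group $G$ (written additively) is called $k$-barycentric if $\sum_{i=1}^k g_i = k\,g_j$ for some $1\le j\le k$. The $k$-th barycentric Olson constant $\mathsf{BO}(k,G)$ is the smallest integer $\ell$ such that every subset $A\subseteq G$ with $|A|\ge \ell$ contains a $k$-barycentric subset (so that always $\mathsf{BO}(k,G)\le |G|+1$). $\log$ denotes the natural logarithm. *)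

theory Defs
  imports Complex_Main
begin

text \<open>The cyclic group Z/nZ is modelled by the residues {0..<n} (as naturals) with
  addition modulo n. Group equalities are congruences mod n.\<close>

definition barycentric_mod :: "nat \<Rightarrow> nat \<Rightarrow> nat set \<Rightarrow> bool" where
  "barycentric_mod n k S \<longleftrightarrow> S \<subseteq> {0..<n} \<and> card S = k \<and>
     (\<exists>j\<in>S. (\<Sum>S) mod n = (k * j) mod n)"

definition BO_cyclic :: "nat \<Rightarrow> nat \<Rightarrow> nat" where
  "BO_cyclic k n = (LEAST l. \<forall>A. A \<subseteq> {0..<n} \<and> card A \<ge> l \<longrightarrow>
       (\<exists>S\<subseteq>A. barycentric_mod n k S))"

end

theory Submission
  imports Defs "HOL-Library.FuncSet"
begin

(* Fix K = k(n), a dimension D and a digit bound m, and put d = K*m.  Digit vectors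
   x \<in> {0..<m}^D are read as base-d numbers x_0 + x_1 d + ... + x_{D-1} d^{D-1} < d^D.
   Since K * d^D \<le> n and K digits below m never carry in base d, a K-barycentric
   subset of such numbers modulo n is a K-element set W of digit vectors whose
   coordinatewise sum is K times one member c \<in> W.  If all vectors of W lie on one
   sphere (same sum of squares), strict convexity forces W = {c}, impossible for K \<ge> 2.
   By pigeonhole one sphere contains at least m^D / (D (m-1)^2 + 1) vectors, which gives
   BO(K, Z/nZ) > m^(D-2) / (D+1).  Choosing D \<approx> sqrt(log n / log K) and m \<approx> exp of
   the remaining budget yields n * exp(-5 sqrt(log K log n)) once log K / log n \<le> 1/9,
   which holds eventually by the hypothesis log k(n) / log n \<longrightarrow> 0. *)

section \<open>Base-d digit expansions\<close>

definition digit_value :: "nat \<Rightarrow> nat \<Rightarrow> (nat \<Rightarrow> nat) \<Rightarrow> nat" where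
  "digit_value d D x = (\<Sum>t<D. x t * d ^ t)"

lemma digit_value_less:
  assumes "\<forall>t<D. x t < d"
  shows "digit_value d D x < d ^ D"
  using assms
proof (induction D)
  case 0
  then show ?case by (simp add: digit_value_def)
next
  case (Suc D)
  have "digit_value d (Suc D) x = digit_value d D x + x D * d ^ D"
    by (simp add: digit_value_def)
  also have "\<dots> < d ^ D + x D * d ^ D"
    using Suc by simp
  also have "\<dots> = (x D + 1) * d ^ D" by simp
  also have "\<dots> \<le> d * d ^ D"
    using Suc.prems by (intro mult_right_mono) auto
  finally show ?case by simp
qed

lemma digit_value_eq_imp_digits_eq:
  assumes "\<forall>t<D. x t < d" "\<forall>t<D. y t < d" "digit_value d D x = digit_value d D y"
  shows "\<forall>t<D. x t = y t"
  using assms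
proof (induction D arbitrary: x y)
  case 0
  then show ?case by simp
next
  case (Suc D)
  have split: "digit_value d (Suc D) z = z 0 + d * digit_value d D (\<lambda>t. z (Suc t))" for z
    unfolding digit_value_def sum.lessThan_Suc_shift
    by (simp add: sum_distrib_left mult.assoc mult.left_commute)
  have "x 0 < d" "y 0 < d"
    using Suc.prems by auto
  have low: "x 0 = y 0"
  proof -
    have "x 0 = digit_value d (Suc D) x mod d"
      using \<open>x 0 < d\<close> unfolding split by simp
    also have "\<dots> = digit_value d (Suc D) y mod d"
      using Suc.prems(3) by simp
    also have "\<dots> = y 0"
      using \<open>y 0 < d\<close> unfolding split by simp
    finally show ?thesis .
  qed
  with Suc.prems(3) have tail: "digit_value d D (\<lambda>t. x (Suc t)) = digit_value d D (\<lambda>t. y (Suc t))"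
    using \<open>x 0 < d\<close> unfolding split by simp
  have "\<forall>t<D. x (Suc t) < d" "\<forall>t<D. y (Suc t) < d"
    using Suc.prems(1,2) by simp_all
  from Suc.IH[OF this tail] have high: "\<forall>t<D. x (Suc t) = y (Suc t)" .
  show ?case
  proof (intro allI impI)
    fix t assume "t < Suc D"
    then show "x t = y t"
      using low high by (cases t) auto
  qed
qed

lemma digit_value_sum:
  "(\<Sum>x\<in>W. digit_value d D x) = digit_value d D (\<lambda>t. \<Sum>x\<in>W. x t)"
  unfolding digit_value_def sum_distrib_right by (rule sum.swap)

lemma digit_value_scale:
  "K * digit_value d D x = digit_value d D (\<lambda>t. K * x t)"
  unfolding digit_value_def by (simp add: sum_distrib_left mult.assoc)

lemma digit_value_inj_on:
  assumes "V \<subseteq> extensional {..<D}" and digit: "\<And>x t. x \<in> V \<Longrightarrow> t < D \<Longrightarrow> x t < d"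
  shows "inj_on (digit_value d D) V"
proof
  fix x y assume "x \<in> V" "y \<in> V" and eq: "digit_value d D x = digit_value d D y"
  have "\<forall>t<D. x t < d" "\<forall>t<D. y t < d"
    using digit \<open>x \<in> V\<close> \<open>y \<in> V\<close> by blast+
  from digit_value_eq_imp_digits_eq[OF this eq] have "\<forall>t<D. x t = y t" .
  moreover have "x \<in> extensional {..<D}" "y \<in> extensional {..<D}"
    using assms(1) \<open>x \<in> V\<close> \<open>y \<in> V\<close> by auto
  ultimately show "x = y"
    by (intro extensionalityI[of _ "{..<D}"]) simp_all
qed

text \<open>Adding K digit vectors whose digits are below d/K produces no carries in base d:
  if their codes sum to K times the code of a member c, the coordinates sum to K c.\<close>

lemma carry_free_sum:
  assumes "finite W" "c \<in> W"
    and small: "\<And>x t. x \<in> W \<Longrightarrow> t < D \<Longrightarrow> card W * x t < d"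
    and eq: "(\<Sum>x\<in>W. digit_value d D x) = card W * digit_value d D c"
    and "t < D"
  shows "(\<Sum>x\<in>W. x t) = card W * c t"
proof -
  have digits_eq: "digit_value d D (\<lambda>t. \<Sum>x\<in>W. x t) = digit_value d D (\<lambda>t. card W * c t)"
    using eq by (simp only: digit_value_sum digit_value_scale)
  have "0 < card W"
    using assms(1,2) card_gt_0_iff by blast
  have sum_digit: "\<forall>t<D. (\<Sum>x\<in>W. x t) < d"
  proof (intro allI impI)
    fix t assume "t < D"
    have "\<forall>x\<in>W. card W * x t < d"
      using small \<open>t < D\<close> by blast
    then have "card W * (\<Sum>x\<in>W. x t) < (\<Sum>x\<in>W. d)"
      unfolding sum_distrib_left using \<open>finite W\<close> \<open>c \<in> W\<close>
      by (intro sum_strict_mono) auto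
    then show "(\<Sum>x\<in>W. x t) < d"
      using \<open>0 < card W\<close> by simp
  qed
  have scaled_digit: "\<forall>t<D. card W * c t < d"
    using small[OF \<open>c \<in> W\<close>] by blast
  from digit_value_eq_imp_digits_eq[OF sum_digit scaled_digit digits_eq]
  show ?thesis
    using \<open>t < D\<close> by blast
qed

section \<open>Strict convexity of spheres\<close>

text \<open>If finitely many vectors v x lie on a common sphere and their sum is card W times
  one of them, v c, then all of them equal v c: expanding the squares, the total
  squared distance to v c vanishes.\<close>

lemma barycentre_on_sphere_is_constant:
  fixes v :: "'b \<Rightarrow> nat \<Rightarrow> 'a::linordered_idom"
  assumes "finite W" "c \<in> W"
    and sphere: "\<And>x. x \<in> W \<Longrightarrow> (\<Sum>t<D. (v x t)^2) = r"
    and barycentre: "\<And>t. t < D \<Longrightarrow> (\<Sum>x\<in>W. v x t) = of_nat (card W) * v c t"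
    and "x \<in> W" "t < D"
  shows "v x t = v c t"
proof -
  have "(\<Sum>y\<in>W. \<Sum>t<D. (v y t - v c t)^2)
      = (\<Sum>y\<in>W. \<Sum>t<D. (v y t)^2) - 2 * (\<Sum>t<D. v c t * (\<Sum>y\<in>W. v y t))
        + of_nat (card W) * (\<Sum>t<D. (v c t)^2)"
    by (simp add: power2_diff sum.distrib sum_subtractf algebra_simps sum_distrib_left
        sum.swap[of _ W "{..<D}"])
  also have "\<dots> = 0"
  proof -
    have "(\<Sum>y\<in>W. \<Sum>t<D. (v y t)^2) = of_nat (card W) * r"
      using sphere by simp
    moreover have "(\<Sum>t<D. v c t * (\<Sum>y\<in>W. v y t)) = of_nat (card W) * (\<Sum>t<D. (v c t)^2)"
      by (simp add: barycentre power2_eq_square sum_distrib_left mult.left_commute)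
    ultimately show ?thesis
      using sphere[OF \<open>c \<in> W\<close>] by simp
  qed
  finally have "(\<Sum>y\<in>W. \<Sum>t<D. (v y t - v c t)^2) = 0" .
  then have "(\<Sum>t<D. (v x t - v c t)^2) = 0"
    using \<open>finite W\<close> \<open>x \<in> W\<close> by (subst (asm) sum_nonneg_eq_0_iff) (auto intro: sum_nonneg)
  then show ?thesis
    using \<open>t < D\<close> by (subst (asm) sum_nonneg_eq_0_iff) auto
qed

lemma sphere_barycentre_singleton:
  fixes W :: "(nat \<Rightarrow> nat) set"
  assumes "finite W" "c \<in> W" and ext: "W \<subseteq> extensional {..<D}"
    and sphere: "\<And>x. x \<in> W \<Longrightarrow> (\<Sum>t<D. (x t)^2) = r"
    and barycentre: "\<And>t. t < D \<Longrightarrow> (\<Sum>x\<in>W. x t) = card W * c t"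
  shows "W = {c}"
proof -
  have same: "x t = c t" if "x \<in> W" "t < D" for x t
  proof -
    have "int (x t) = int (c t)"
    proof (rule barycentre_on_sphere_is_constant[where v = "\<lambda>y t. int (y t)" and r = "int r"
          and W = W and c = c and D = D and x = x and t = t])
      show "(\<Sum>t<D. (int (y t))^2) = int r" if "y \<in> W" for y
        using sphere[OF that] by (simp flip: of_nat_power of_nat_sum)
      show "(\<Sum>y\<in>W. int (y t)) = of_nat (card W) * int (c t)" if "t < D" for t
        using barycentre[OF that] by (simp flip: of_nat_sum of_nat_mult)
    qed (fact \<open>finite W\<close> \<open>c \<in> W\<close> that)+
    then show ?thesis by simp
  qed
  have "x = c" if "x \<in> W" for x
  proof (rule extensionalityI[of _ "{..<D}"])
    show "x \<in> extensional {..<D}" "c \<in> extensional {..<D}"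
      using ext \<open>x \<in> W\<close> \<open>c \<in> W\<close> by auto
    show "x t = c t" if "t \<in> {..<D}" for t
      using same[OF \<open>x \<in> W\<close>] that by simp
  qed
  then show ?thesis
    using \<open>c \<in> W\<close> by blast
qed

section \<open>Barycentric-free sets from a sphere\<close>

lemma BO_cyclic_greater_card:
  assumes "A \<subseteq> {0..<n}" "\<not> (\<exists>S\<subseteq>A. barycentric_mod n K S)"
  shows "card A < BO_cyclic K n"
proof -
  let ?P = "\<lambda>l. \<forall>A. A \<subseteq> {0..<n} \<and> card A \<ge> l \<longrightarrow> (\<exists>S\<subseteq>A. barycentric_mod n K S)"
  have "?P (Suc n)"
  proof (intro allI impI)
    fix B assume B: "B \<subseteq> {0..<n} \<and> Suc n \<le> card B"
    then have "card B \<le> n"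
      using card_mono[of "{0..<n}" B] by simp
    with B show "\<exists>S\<subseteq>B. barycentric_mod n K S" by simp
  qed
  then have "?P (BO_cyclic K n)"
    unfolding BO_cyclic_def by (rule LeastI)
  then show ?thesis
    using assms by (meson not_le)
qed

lemma sphere_code_no_barycentric:
  assumes K2: "2 \<le> K"
    and small: "\<And>x t. x \<in> V \<Longrightarrow> t < D \<Longrightarrow> K * x t < d"
    and ext: "V \<subseteq> extensional {..<D}"
    and sphere: "\<And>x. x \<in> V \<Longrightarrow> (\<Sum>t<D. (x t)^2) = r"
    and room: "K * d ^ D \<le> n"
  shows "\<not> (\<exists>S \<subseteq> digit_value d D ` V. barycentric_mod n K S)"
proof
  assume "\<exists>S \<subseteq> digit_value d D ` V. barycentric_mod n K S"
  then obtain S j where S: "S \<subseteq> digit_value d D ` V" "card S = K"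
    and "j \<in> S" and j: "(\<Sum>S) mod n = (K * j) mod n"
    unfolding barycentric_mod_def by blast
  have digit: "x t < d" if "x \<in> V" "t < D" for x t
  proof -
    have "x t \<le> K * x t" using K2 by simp
    then show ?thesis using small[OF that] by linarith
  qed
  have inj: "inj_on (digit_value d D) V"
    using ext digit by (rule digit_value_inj_on)
  obtain W where W: "W \<subseteq> V" "S = digit_value d D ` W"
    using S(1) by (rule subset_imageE)
  have injW: "inj_on (digit_value d D) W"
    using inj W(1) inj_on_subset by blast
  have cardW: "card W = K"
    using S(2) W(2) injW by (simp add: card_image)
  then have "finite W"
    using K2 by (intro card_ge_0_finite) simp
  obtain c where "c \<in> W" and jc: "j = digit_value d D c"
    using \<open>j \<in> S\<close> W(2) by auto
  have value_less: "digit_value d D x < d ^ D" if "x \<in> W" for x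
    using digit that W(1) by (intro digit_value_less) blast
  text \<open>Both sides of the barycentric congruence are below n, so it is an equality.\<close>
  have "(\<Sum>x\<in>W. digit_value d D x) < (\<Sum>x\<in>W. d ^ D)"
    using value_less \<open>finite W\<close> cardW K2 by (intro sum_strict_mono) auto
  then have "\<Sum>S < n"
    using W(2) injW cardW room by (simp add: sum.reindex)
  moreover have "K * j < n"
  proof -
    have "K * j < K * d ^ D"
      using value_less[OF \<open>c \<in> W\<close>] jc K2 by simp
    then show ?thesis
      using room by linarith
  qed
  ultimately have "\<Sum>S = K * j"
    using j by simp
  then have codes: "(\<Sum>x\<in>W. digit_value d D x) = card W * digit_value d D c"
    using W(2) injW jc cardW by (simp add: sum.reindex)
  text \<open>No carries occur, so W is a K-set on a sphere with barycentre c \<in> W.\<close>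
  have small_W: "card W * x t < d" if "x \<in> W" "t < D" for x t
    using small[of x t] W(1) cardW that by auto
  have "(\<Sum>x\<in>W. x t) = card W * c t" if "t < D" for t
    using \<open>finite W\<close> \<open>c \<in> W\<close> small_W codes that by (rule carry_free_sum)
  then have "W = {c}"
    using \<open>finite W\<close> \<open>c \<in> W\<close> ext W(1) sphere
    by (intro sphere_barycentre_singleton[where r = r]) auto
  then show False
    using cardW K2 by simp
qed

lemma large_fibre:
  assumes "finite X" "f ` X \<subseteq> {..R}"
  shows "\<exists>r\<le>R. card X \<le> Suc R * card {x\<in>X. f x = r}"
proof (rule ccontr)
  assume "\<not> ?thesis"
  then have small: "\<forall>r\<in>{..R}. Suc R * card {x\<in>X. f x = r} < card X"
    by auto
  have "card X = (\<Sum>r\<in>{..R}. card {x\<in>X. f x = r})"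
    using sum.group[OF assms(1) finite_atMost assms(2), of "\<lambda>_. 1::nat"] by simp
  then have "Suc R * card X = (\<Sum>r\<in>{..R}. Suc R * card {x\<in>X. f x = r})"
    by (simp add: sum_distrib_left)
  also have "\<dots> < (\<Sum>r\<in>{..R}. card X)"
    using small by (intro sum_strict_mono) auto
  also have "\<dots> = Suc R * card X" by simp
  finally show False by simp
qed

text \<open>The m^D digit vectors with digits below m have squared norms in {0..D (m-1)^2},
  so some sphere contains at least a 1 / (D (m-1)^2 + 1) fraction of them.\<close>

lemma large_sphere:
  obtains r where "m ^ D \<le> Suc (D * (m - 1)^2) *
    card {x \<in> PiE {..<D} (\<lambda>_. {..<m}). (\<Sum>t<D. (x t)^2) = r}"
proof -
  define X where "X = PiE {..<D} (\<lambda>_. {..<m})"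
  define norm2 where "norm2 x = (\<Sum>t<D. (x t)^2)" for x :: "nat \<Rightarrow> nat"
  have "finite X" and cardX: "card X = m ^ D"
    unfolding X_def by (auto simp: card_PiE intro: finite_PiE)
  have "norm2 ` X \<subseteq> {..D * (m - 1)^2}"
  proof
    fix y assume "y \<in> norm2 ` X"
    then obtain x where "x \<in> X" "y = norm2 x" by auto
    have "x t \<le> m - 1" if "t < D" for t
      using PiE_mem[of x "{..<D}" "\<lambda>_. {..<m}" t] \<open>x \<in> X\<close> that unfolding X_def by simp
    then have "norm2 x \<le> (\<Sum>t<D. (m - 1)^2)"
      unfolding norm2_def by (intro sum_mono power_mono) auto
    then show "y \<in> {..D * (m - 1)^2}"
      using \<open>y = norm2 x\<close> by simp
  qed
  then obtain r where "card X \<le> Suc (D * (m - 1)^2) * card {x \<in> X. norm2 x = r}"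
    using large_fibre[OF \<open>finite X\<close>] by blast
  then show ?thesis
    using that[of r] unfolding cardX unfolding X_def norm2_def by simp
qed

lemma sphere_code_card_less_BO:
  assumes K2: "2 \<le> K"
    and small: "\<And>x t. x \<in> V \<Longrightarrow> t < D \<Longrightarrow> K * x t < d"
    and ext: "V \<subseteq> extensional {..<D}"
    and sphere: "\<And>x. x \<in> V \<Longrightarrow> (\<Sum>t<D. (x t)^2) = r"
    and room: "K * d ^ D \<le> n"
  shows "card V < BO_cyclic K n"
proof -
  have digit: "x t < d" if "x \<in> V" "t < D" for x t
  proof -
    have "x t \<le> K * x t" using K2 by simp
    then show ?thesis using small[OF that] by linarith
  qed
  have "inj_on (digit_value d D) V"
    using ext digit by (rule digit_value_inj_on)
  then have card_codes: "card (digit_value d D ` V) = card V"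
    by (rule card_image)
  have "digit_value d D ` V \<subseteq> {0..<n}"
  proof
    fix y assume "y \<in> digit_value d D ` V"
    then obtain x where "x \<in> V" "y = digit_value d D x" by auto
    have "\<forall>t<D. x t < d"
      using digit[OF \<open>x \<in> V\<close>] by blast
    then have "y < d ^ D"
      using \<open>y = digit_value d D x\<close> digit_value_less by blast
    also have "\<dots> \<le> K * d ^ D"
      using K2 by simp
    finally show "y \<in> {0..<n}"
      using room by simp
  qed
  moreover have "\<not> (\<exists>S \<subseteq> digit_value d D ` V. barycentric_mod n K S)"
    using K2 small ext sphere room by (rule sphere_code_no_barycentric)
  ultimately show ?thesis
    unfolding card_codes[symmetric] by (rule BO_cyclic_greater_card)
qed

lemma BO_cyclic_sphere_count:
  assumes K2: "2 \<le> K" and room: "K * (K * m) ^ D \<le> n"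
  shows "m ^ D \<le> Suc (D * (m - 1)^2) * BO_cyclic K n"
proof -
  obtain r where r: "m ^ D \<le> Suc (D * (m - 1)^2) *
      card {x \<in> PiE {..<D} (\<lambda>_. {..<m}). (\<Sum>t<D. (x t)^2) = r}"
    by (rule large_sphere)
  define V where "V = {x \<in> PiE {..<D} (\<lambda>_. {..<m}). (\<Sum>t<D. (x t)^2) = r}"
  have "card V < BO_cyclic K n"
  proof (rule sphere_code_card_less_BO[where d = "K * m" and r = r])
    show "K * x t < K * m" if "x \<in> V" "t < D" for x t
      using that K2 unfolding V_def by auto
    show "V \<subseteq> extensional {..<D}"
      unfolding V_def by (auto simp: PiE_def)
    show "(\<Sum>t<D. (x t)^2) = r" if "x \<in> V" for x
      using that unfolding V_def by simp
  qed fact+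
  then have "Suc (D * (m - 1)^2) * card V \<le> Suc (D * (m - 1)^2) * BO_cyclic K n"
    by (intro mult_left_mono) simp_all
  with r show ?thesis
    unfolding V_def by linarith
qed

lemma BO_cyclic_power_bound:
  assumes K2: "2 \<le> K" and m: "1 \<le> m" and D: "2 \<le> D" and room: "K * (K * m) ^ D \<le> n"
  shows "real m ^ (D - 2) / (real D + 1) \<le> real (BO_cyclic K n)"
proof -
  have "Suc (D * (m - 1)^2) \<le> (D + 1) * m^2"
  proof -
    have "1 \<le> m^2"
      using m by simp
    moreover have "D * (m - 1)^2 \<le> D * m^2"
      by (intro mult_left_mono power_mono) auto
    ultimately have "1 + D * (m - 1)^2 \<le> m^2 + D * m^2"
      by (rule add_le_mono)
    then show ?thesis by simp
  qed
  then have bound: "m ^ D \<le> (D + 1) * m^2 * BO_cyclic K n"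
    using BO_cyclic_sphere_count[OF K2 room] by (meson le_trans mult_le_mono1)
  have "m ^ D = m^2 * m ^ (D - 2)"
    using D by (metis le_add_diff_inverse power_add)
  with bound have "m^2 * m ^ (D - 2) \<le> m^2 * ((D + 1) * BO_cyclic K n)"
    by (simp only: ac_simps)
  then have "m ^ (D - 2) \<le> (D + 1) * BO_cyclic K n"
    by (rule mult_left_le_imp_le) (use m in simp)
  then have "real m ^ (D - 2) \<le> (real D + 1) * real (BO_cyclic K n)"
    by (metis of_nat_le_iff of_nat_power of_nat_mult of_nat_Suc add.commute plus_1_eq_Suc)
  then show ?thesis
    by (simp add: divide_le_eq mult.commute)
qed

section \<open>Choice of parameters\<close>

text \<open>With log q = (log n - log K)/D - log K, i.e. K (K q)^D = n, any digit bound m \<le> q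
  leaves room for the base-(K m) expansions.\<close>

lemma room_for_digits:
  assumes "0 < K" "0 < n" "0 < D"
    and m: "real m \<le> exp ((ln (real n) - ln (real K)) / real D - ln (real K))"
  shows "K * (K * m) ^ D \<le> n"
proof -
  have "real K * (real K * real m) ^ D
      \<le> real K * (real K * exp ((ln (real n) - ln (real K)) / real D - ln (real K))) ^ D"
    using m \<open>0 < K\<close> by (intro mult_left_mono power_mono) auto
  also have "\<dots> = real K * exp ((ln (real n) - ln (real K)) / real D) ^ D"
    using \<open>0 < K\<close> by (simp add: exp_diff)
  also have "\<dots> = real K * exp (ln (real n) - ln (real K))"
    using \<open>0 < D\<close> by (simp flip: exp_of_nat_mult)
  also have "\<dots> = real n"
    using \<open>0 < K\<close> \<open>0 < n\<close> by (simp add: exp_diff)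
  finally show ?thesis
    by (simp flip: of_nat_mult of_nat_power)
qed

text \<open>With q = exp g \<ge> 2 as above, the digit bound m = \<lfloor>q\<rfloor> \<ge> q/2 in the power bound
  gives BO(K, Z/nZ) \<ge> (q/2)^(D-2) / (D+1).\<close>

lemma BO_cyclic_exp_bound:
  fixes g :: real
  assumes K2: "2 \<le> K" and "0 < n" and D: "2 \<le> D"
    and g: "g = (ln (real n) - ln (real K)) / real D - ln (real K)" and "2 \<le> exp g"
  shows "exp ((real D - 2) * (g - ln 2)) / (real D + 1) \<le> real (BO_cyclic K n)"
proof -
  define m where "m = nat \<lfloor>exp g\<rfloor>"
  have m_eq: "real m = of_int \<lfloor>exp g\<rfloor>"
    unfolding m_def by (simp add: of_nat_nat)
  have m_le: "real m \<le> exp g"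
    unfolding m_eq by (rule of_int_floor_le)
  have m_ge: "exp g / 2 \<le> real m"
    using \<open>2 \<le> exp g\<close> real_of_int_floor_gt_diff_one[of "exp g"] unfolding m_eq by linarith
  then have "1 \<le> m"
    using \<open>2 \<le> exp g\<close> by linarith
  have room: "K * (K * m) ^ D \<le> n"
    using K2 \<open>0 < n\<close> D m_le unfolding g by (intro room_for_digits) auto
  have "real D - 2 = real (D - 2)"
    using D by simp
  then have "exp ((real D - 2) * (g - ln 2)) = (exp g / 2) ^ (D - 2)"
    by (simp only: exp_of_nat_mult) (simp add: exp_diff)
  also have "\<dots> \<le> real m ^ (D - 2)"
    using m_ge \<open>2 \<le> exp g\<close> by (intro power_mono) auto
  finally have "exp ((real D - 2) * (g - ln 2)) / (real D + 1) \<le> real m ^ (D - 2) / (real D + 1)"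
    by (intro divide_right_mono) auto
  also have "\<dots> \<le> real (BO_cyclic K n)"
    using K2 \<open>1 \<le> m\<close> D room by (rule BO_cyclic_power_bound)
  finally show ?thesis .
qed

text \<open>An elementary estimate used with L = u^2 l = log n, l = log K and D \<approx> u:
  the exponent (D-2) (log q - log 2) of the power bound, where
  log q = (L - l)/D - l, exceeds L - 5 sqrt(l L) + log(D+1).\<close>

lemma exponent_estimate:
  fixes l u D :: real
  assumes l: "1 \<le> l" and u: "1 \<le> u" and D: "u \<le> D" "D \<le> u + 1"
  shows "u^2 * l - 5 * (u * l) + ln (D + 1)
           \<le> (D - 2) * ((u^2 * l - l) / D - l - ln 2)"
proof -
  define L where "L = u^2 * l"
  define s where "s = u * l"
  have "0 < D" using u D by linarith
  have expand: "(D - 2) * ((L - l) / D - l - ln 2) = (L - l) - 2 * ((L - l) / D) - (D - 2) * (l + ln 2)"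
    using \<open>0 < D\<close> by (simp add: field_simps)
  have "(L - l) / D \<le> L / D"
    using l \<open>0 < D\<close> by (intro divide_right_mono) auto
  also have "\<dots> \<le> L / u"
    using D u l unfolding L_def by (intro divide_left_mono) auto
  also have "L / u = s"
    using u unfolding L_def s_def by (simp add: power2_eq_square)
  finally have step: "(L - l) / D \<le> s" .
  have "(D - 2) * (l + ln 2) \<le> (u - 1) * (l + ln 2)"
    using D l by (intro mult_right_mono) auto
  also have "\<dots> = s - l + u * ln 2 - ln 2"
    unfolding s_def by (simp add: algebra_simps)
  finally have digits: "(D - 2) * (l + ln 2) \<le> s - l + u * ln 2 - ln 2" .
  have log: "ln (D + 1) \<le> u + 1"
    using ln_le_minus_one[of "D + 1"] \<open>0 < D\<close> D by linarith
  have "(u - 1) * (1 - ln 2) \<ge> 0"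
    using u ln_2_less_1 by simp
  then have "1 + u * ln 2 \<le> u + ln 2"
    by (simp add: algebra_simps)
  moreover have "u \<le> s"
    using u l unfolding s_def by (simp add: mult_le_cancel_left1)
  ultimately have "L - 5 * s + ln (D + 1) \<le> (D - 2) * ((L - l) / D - l - ln 2)"
    unfolding expand using step digits log by linarith
  then show ?thesis
    unfolding L_def s_def .
qed

text \<open>The quantitative lower bound, valid as soon as log n \<ge> 9 log K: with l = log K and
  L = log n take u = sqrt(L / l) \<ge> 3, D = \<lceil>u\<rceil> and g = (L - l)/D - l \<ge> l (u - 2) \<ge> 1.\<close>

lemma BO_cyclic_lower_bound:
  assumes K3: "3 \<le> K" and "0 < n" and ratio: "9 * ln (real K) \<le> ln (real n)"
  shows "real n * exp (- 5 * sqrt (ln (real K) * ln (real n))) \<le> real (BO_cyclic K n)"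
proof -
  define l where "l = ln (real K)"
  define L where "L = ln (real n)"
  have l: "1 \<le> l"
    unfolding l_def using K3 exp_le by (subst ln_ge_iff) auto
  define u where "u = sqrt (L / l)"
  have L_eq: "L = u^2 * l"
    using ratio l unfolding u_def L_def l_def by simp
  have u: "3 \<le> u"
    using ratio l unfolding u_def L_def[symmetric] l_def[symmetric]
    by (intro real_le_rsqrt) (simp add: field_simps)
  have sqrt_eq: "sqrt (l * L) = u * l"
    using u l unfolding L_eq by (simp add: real_sqrt_mult power2_eq_square)
  define D where "D = nat \<lceil>u\<rceil>"
  have D: "u \<le> real D" "real D \<le> u + 1"
    unfolding D_def using u by (auto simp: of_nat_nat)
  have "2 \<le> D"
    using D u by linarith
  define g where "g = (L - l) / real D - l"
  have "l * (u - 1) = (L - l) / (u + 1)"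
    using u unfolding L_eq by (simp add: field_simps power2_eq_square)
  also have "\<dots> \<le> (L - l) / real D"
    using D u l one_le_power[of u 2] unfolding L_eq by (intro divide_left_mono) auto
  finally have "l * (u - 1) \<le> (L - l) / real D" .
  moreover have "1 \<le> l * (u - 2)"
    using mult_mono[of 1 l 1 "u - 2"] l u by simp
  moreover have "l * (u - 1) = l * (u - 2) + l"
    by (simp add: algebra_simps)
  ultimately have "1 \<le> g"
    unfolding g_def by linarith
  then have "2 \<le> exp g"
    using exp_ge_add_one_self[of g] by linarith
  have "real n = exp L"
    using \<open>0 < n\<close> unfolding L_def by simp
  then have "real n * exp (- 5 * sqrt (l * L)) = exp (L - 5 * (u * l) + ln (real D + 1)) / (real D + 1)"
    unfolding sqrt_eq by (simp add: exp_add exp_diff exp_minus divide_inverse)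
  also have "\<dots> \<le> exp ((real D - 2) * (g - ln 2)) / (real D + 1)"
  proof -
    have "u^2 * l - 5 * (u * l) + ln (real D + 1)
        \<le> (real D - 2) * ((u^2 * l - l) / real D - l - ln 2)"
      using l u D by (intro exponent_estimate) auto
    then have "L - 5 * (u * l) + ln (real D + 1) \<le> (real D - 2) * (g - ln 2)"
      unfolding g_def L_eq by (simp add: diff_diff_eq)
    then show ?thesis
      by (intro divide_right_mono) simp_all
  qed
  also have "\<dots> \<le> real (BO_cyclic K n)"
    using K3 \<open>0 < n\<close> \<open>2 \<le> D\<close> \<open>2 \<le> exp g\<close>
    by (intro BO_cyclic_exp_bound) (simp_all add: g_def L_def l_def)
  finally show ?thesis
    unfolding l_def L_def .
qed

theorem mainTheorem11:
  fixes k :: "nat \<Rightarrow> nat"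
  assumes "\<forall>\<^sub>F n in sequentially. 3 \<le> k n \<and> k n + 3 \<le> n"
    and "((\<lambda>n. ln (real (k n)) / ln (real n)) \<longlongrightarrow> 0) sequentially"
  shows "\<forall>\<^sub>F n in sequentially.
           real (BO_cyclic (k n) n) \<ge> real n * exp (- 5 * sqrt (ln (real (k n)) * ln (real n)))"
proof -
  have "\<forall>\<^sub>F n in sequentially. ln (real (k n)) / ln (real n) < 1/9"
    using order_tendstoD(2)[OF assms(2), of "1/9"] by simp
  with assms(1) show ?thesis
  proof eventually_elim
    case (elim n)
    then have "0 < ln (real n)"
      by simp
    with elim have "9 * ln (real (k n)) \<le> ln (real n)"
      by (simp add: divide_less_eq)
    with elim show ?case
      by (intro BO_cyclic_lower_bound) auto
  qed
qed

end
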